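(* Let $M_\sharp\in\mathbb{R}^{d_1\times d_2}$ have rank $r$, let $M_\sharp=U\Lambda V^\top$ be a compact singular value decomposition ($U\in\mathbb{R}^{d_1\times r}$, $V\in\mathbb{R}^{d_2\times r}$ with orthonormal columns, $\Lambda$ diagonal $r\times r$ with positive entries), and set $X_\sharp=U\sqrt\Lambda$, $Y_\sharp=\sqrt\Lambda V^\top$. Let $$\mathcal{D}^*(M_\sharp)=\{(X_\sharp A,A^{-1}Y_\sharp):A\in GL(r)\}.$$ Fix $\nu>0$. Then for all $X\in\mathbb{R}^{d_1\times r}$, $Y\in\mathbb{R}^{r\times d_2}$ satisfying $$\max\{\|X-X_\sharp\|_F,\|Y-Y_\sharp\|_F\}\le\nu\sqrt{\sigma_r(M_\sharp)},\qquad \mathrm{dist}\big((X,Y),\mathcal{D}^*(M_\sharp)\big)\le\frac{\sqrt{\sigma_r(M_\sharp)}}{1+2(1+\sqrt2)\nu},$$ we have $$\|XY-M_\sharp\|_F\ge\frac{\sqrt{\sigma_r(M_\sharp)}}{2+4(1+\sqrt2)\nu}\cdot\mathrm{dist}\big((X,Y),\mathcal{D}^*(M_\sharp)\big).$$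
   Context: $\sigma_r(M)$ is the $r$-th largest singular value. $GL(r)$ is the set of invertible $r\times r$ matrices. The distance is $\mathrm{dist}((X,Y),\mathcal{D}^*(M_\sharp))=\inf_{A\in GL(r)}\sqrt{\|X-X_\sharp A\|_F^2+\|Y-A^{-1}Y_\sharp\|_F^2}$. *)

theory Defs
  imports "HOL-Analysis.Analysis"
begin

definition frob :: "real^'n^'m \<Rightarrow> real" where
  "frob A = sqrt (\<Sum>i\<in>UNIV. \<Sum>j\<in>UNIV. (A $ i $ j)\<^sup>2)"

text \<open>The k-th largest singular value (k \<ge> 1), via the Courant--Fischer min-max
  characterisation: the maximum over k-dimensional subspaces S of the minimum of
  the norm of M x over unit vectors x in S.\<close>
definition singular_value :: "nat \<Rightarrow> real^'n^'m \<Rightarrow> real" where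
  "singular_value k M =
     Sup ((\<lambda>S. Inf ((\<lambda>x. norm (M *v x)) ` {x\<in>S. norm x = 1})) `
          {S. subspace S \<and> dim S = k})"

definition diagm :: "('r::finite \<Rightarrow> real) \<Rightarrow> real^'r^'r" where
  "diagm l = (\<chi> i j. if i = j then l i else 0)"

definition dist_Dstar :: "real^'r^'d1 \<Rightarrow> real^'d2^'r \<Rightarrow> real^'r^'d1 \<Rightarrow> real^'d2^'r \<Rightarrow> real" where
  "dist_Dstar X Y Xs Ys =
     Inf ((\<lambda>A. sqrt ((frob (X - Xs ** A))\<^sup>2 + (frob (Y - matrix_inv A ** Ys))\<^sup>2))
          ` {A :: real^'r^'r. invertible A})"

end

theory Submission
  imports Defs
begin

text \<open>
  Write \<open>D = diag(\<surd>\<lambda>)\<close>, so that \<open>X\<^sub>\<sharp> = U D\<close> and \<open>Y\<^sub>\<sharp> = D V\<^sup>T\<close>, and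
  \<open>s = \<surd>\<sigma>\<^sub>r(M)\<close>.

  If \<open>U\<^sup>T X\<close> and \<open>Y\<^sup>T\<close> have smallest singular value at least \<open>c > 0\<close>, take
  \<open>A = D\<^sup>-\<^sup>1 U\<^sup>T X\<close>. Then \<open>X - X\<^sub>\<sharp> A = (I - U U\<^sup>T) X\<close> and
  \<open>U\<^sup>T (X Y - M) = (U\<^sup>T X)(Y - A\<^sup>-\<^sup>1 Y\<^sub>\<sharp>)\<close>, so by Pythagoras
  \<open>\<parallel>X Y - M\<parallel>\<^sup>2 \<ge> c\<^sup>2 (\<parallel>X - X\<^sub>\<sharp> A\<parallel>\<^sup>2 + \<parallel>Y - A\<^sup>-\<^sup>1 Y\<^sub>\<sharp>\<parallel>\<^sup>2) \<ge> c\<^sup>2 dist\<^sup>2\<close>.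

  The bound \<open>c = s / (2K)\<close>, \<open>K = 1 + 2(1 + \<surd>2)\<nu>\<close>, comes from perturbation. For
  \<open>\<nu> \<le> 1/2\<close> it follows from the closeness of \<open>(X, Y)\<close> to \<open>(X\<^sub>\<sharp>, Y\<^sub>\<sharp>)\<close>, whose
  factors are bounded below by \<open>s\<close>. For larger \<open>\<nu>\<close> take \<open>A\<close> nearly attaining the distance:
  \<open>D A\<close> and \<open>A\<^sup>-\<^sup>1 D\<close> then lie within \<open>\<mu> = 6s/(5K) + \<nu> s\<close> of \<open>D\<close>, and
  \<open>(A\<^sup>-\<^sup>1 D) D\<^sup>-\<^sup>2 (D A) = I\<close> forces both to be bounded below by \<open>s\<^sup>2/(s + \<mu>)\<close>, which
  leaves room for the remaining perturbation of size \<open>6s/(5K)\<close>.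
\<close>

lemma matrix_mult_diff_distrib: "(A::'a::ring_1^'n^'m) ** (B - C) = A ** B - A ** C"
  by (simp add: matrix_matrix_mult_def vec_eq_iff sum_subtractf[symmetric] algebra_simps)

lemma matrix_mult_diff_rdistrib: "((A::'a::ring_1^'n^'m) - B) ** C = A ** C - B ** C"
  by (simp add: matrix_matrix_mult_def vec_eq_iff sum_subtractf[symmetric] algebra_simps)

lemma transpose_diff: "transpose (A - B) = transpose A - transpose (B::'a::ab_group_add^'n^'m)"
  by (simp add: transpose_def vec_eq_iff)

lemma matrix_inv:
  assumes "invertible A"
  shows matrix_inv_right: "A ** matrix_inv A = mat 1"
    and matrix_inv_left: "matrix_inv A ** A = mat 1"
proof -
  from assms obtain A' where "A ** A' = mat 1 \<and> A' ** A = mat 1"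
    unfolding invertible_def by blast
  then have "A ** matrix_inv A = mat 1 \<and> matrix_inv A ** A = mat 1"
    unfolding matrix_inv_def by (rule someI)
  then show "A ** matrix_inv A = mat 1" "matrix_inv A ** A = mat 1" by auto
qed

lemma inner_matrix_vector_mult_transpose: "((A::real^'n^'m) *v x) \<bullet> y = x \<bullet> (transpose A *v y)"
  by (metis dot_lmul_matrix inner_commute transpose_matrix_vector)

lemma inner_matrix_mult_transpose: "((U::real^'k^'m) ** P) \<bullet> Q = P \<bullet> (transpose U ** Q)"
proof -
  have "(U ** P) \<bullet> Q = (\<Sum>i\<in>UNIV. \<Sum>j\<in>UNIV. \<Sum>k\<in>UNIV. U$i$k * P$k$j * Q$i$j)"
    by (simp add: inner_vec_def matrix_matrix_mult_def sum_distrib_right)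
  also have "\<dots> = (\<Sum>k\<in>UNIV. \<Sum>j\<in>UNIV. \<Sum>i\<in>UNIV. U$i$k * P$k$j * Q$i$j)"
    by (subst sum.swap, subst (2) sum.swap) (rule sum.cong[OF refl], rule sum.swap)
  also have "\<dots> = P \<bullet> (transpose U ** Q)"
    by (simp add: inner_vec_def matrix_matrix_mult_def transpose_def sum_distrib_left mult_ac)
  finally show ?thesis .
qed

lemma diagm_mult_vec: "diagm l *v x = (\<chi> i. l i * x$i)"
  by (simp add: diagm_def matrix_vector_mult_def vec_eq_iff if_distrib if_distribR cong: if_cong)

lemma diagm_mult_diagm: "diagm a ** diagm b = diagm (\<lambda>i. a i * b i)"
proof -
  have "(\<Sum>k\<in>UNIV. (if i = k then a i else 0) * (if k = j then b k else 0))
      = (\<Sum>k\<in>UNIV. if k = i then a i * (if i = j then b i else 0) else 0)" for i j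
    by (rule sum.cong) auto
  then show ?thesis
    by (simp add: diagm_def matrix_matrix_mult_def vec_eq_iff)
qed

lemma transpose_diagm: "transpose (diagm l) = diagm l"
  by (simp add: diagm_def transpose_def vec_eq_iff)

lemma diagm_const: "diagm (\<lambda>i. c) = mat c"
  by (simp add: diagm_def mat_def)

lemma invertible_diagm:
  assumes "\<And>i. l i \<noteq> 0"
  shows "invertible (diagm l)"
  unfolding invertible_def
proof (intro exI conjI)
  show "diagm l ** diagm (\<lambda>i. 1 / l i) = mat 1" and "diagm (\<lambda>i. 1 / l i) ** diagm l = mat 1"
    using assms by (simp_all add: diagm_mult_diagm flip: diagm_const)
qed

section \<open>The Frobenius norm\<close>

lemma power2_norm_vec: "(norm (x::'a::real_normed_vector^'n))\<^sup>2 = (\<Sum>i\<in>UNIV. (norm (x$i))\<^sup>2)"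
  by (simp add: norm_vec_def L2_set_def sum_nonneg)

lemma frob_eq_norm: "frob A = norm A"
  by (simp add: frob_def norm_vec_def L2_set_def sum_nonneg)

lemma norm_transpose: "norm (transpose (A::real^'n^'m)) = norm A"
proof -
  have "(\<Sum>i\<in>UNIV. \<Sum>j\<in>UNIV. (transpose A $ i $ j)\<^sup>2) = (\<Sum>i\<in>UNIV. \<Sum>j\<in>UNIV. (A $ i $ j)\<^sup>2)"
    by (simp add: transpose_def) (rule sum.swap)
  then show ?thesis by (simp add: frob_eq_norm[symmetric] frob_def)
qed

lemma norm_matrix_vector_mult_le: "norm ((A::real^'n^'m) *v x) \<le> norm A * norm x"
proof -
  have "(norm (A *v x))\<^sup>2 = (\<Sum>i\<in>UNIV. ((A *v x)$i)\<^sup>2)" by (simp add: power2_norm_vec)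
  also have "\<dots> \<le> (\<Sum>i\<in>UNIV. (norm (A$i) * norm x)\<^sup>2)"
  proof (intro sum_mono)
    fix i
    have "\<bar>(A *v x)$i\<bar> \<le> norm (A$i) * norm x"
      by (simp add: matrix_vector_mul_component Cauchy_Schwarz_ineq2)
    then show "((A *v x)$i)\<^sup>2 \<le> (norm (A$i) * norm x)\<^sup>2"
      by (metis abs_ge_zero power2_abs power_mono)
  qed
  also have "\<dots> = (norm A * norm x)\<^sup>2"
    by (simp add: power2_norm_vec[of A] sum_distrib_right power_mult_distrib)
  finally show ?thesis by (rule power2_le_imp_le) simp
qed

lemma power2_norm_matrix_mult_columns:
  "(norm ((W::real^'n^'k) ** P))\<^sup>2 = (\<Sum>j\<in>UNIV. (norm (W *v column j P))\<^sup>2)"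
proof -
  have "(transpose (W ** P)) $ j = W *v column j P" for j
    by (simp add: transpose_def matrix_matrix_mult_def matrix_vector_mult_def column_def vec_eq_iff)
  then show ?thesis by (simp add: norm_transpose[of "W ** P", symmetric] power2_norm_vec)
qed

lemma power2_norm_columns: "(norm (P::real^'m^'n))\<^sup>2 = (\<Sum>j\<in>UNIV. (norm (column j P))\<^sup>2)"
  using power2_norm_matrix_mult_columns[of "mat 1" P] by simp

lemma norm_matrix_mult_le:
  fixes W :: "real^'n^'k"
  assumes "\<And>x. norm (W *v x) \<le> c * norm x" and "c \<ge> 0"
  shows "norm (W ** P) \<le> c * norm P"
proof (rule power2_le_imp_le)
  have "(norm (W ** P))\<^sup>2 \<le> (\<Sum>j\<in>UNIV. (c * norm (column j P))\<^sup>2)"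
    unfolding power2_norm_matrix_mult_columns by (intro sum_mono power_mono assms) simp
  then show "(norm (W ** P))\<^sup>2 \<le> (c * norm P)\<^sup>2"
    by (simp add: power2_norm_columns[of P] power_mult_distrib sum_distrib_left)
qed (use assms in simp)

lemma power2_norm_diagm_mult_vec: "(norm (diagm l *v x))\<^sup>2 = (\<Sum>i\<in>UNIV. (l i)\<^sup>2 * (x$i)\<^sup>2)"
  by (simp add: power2_norm_vec diagm_mult_vec power_mult_distrib)

lemma norm_diagm_mult_vec_le:
  assumes "\<And>i. \<bar>l i\<bar> \<le> m"
  shows "norm (diagm l *v x) \<le> m * norm x"
proof (rule power2_le_imp_le)
  have "(l i)\<^sup>2 * (x$i)\<^sup>2 \<le> m\<^sup>2 * (x$i)\<^sup>2" for i
    using assms[of i] by (intro mult_right_mono) (metis abs_ge_zero power2_abs power_mono, simp)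
  then show "(norm (diagm l *v x))\<^sup>2 \<le> (m * norm x)\<^sup>2"
    by (simp add: power2_norm_diagm_mult_vec power2_norm_vec[of x] power_mult_distrib
        sum_distrib_left sum_mono)
  show "0 \<le> m * norm x"
    using assms[of undefined] by simp
qed

section \<open>Matrices bounded below\<close>

text \<open>\<open>bounded_below c A\<close> says \<open>\<sigma>\<^sub>m\<^sub>i\<^sub>n(A) \<ge> c\<close> when \<open>A\<close> has at most as many columns as rows.\<close>

definition bounded_below :: "real \<Rightarrow> real^'n^'m \<Rightarrow> bool" where
  "bounded_below c A \<longleftrightarrow> (\<forall>x. c * norm x \<le> norm (A *v x))"

lemma norm_matrix_mult_ge:
  assumes "bounded_below c W" and "c \<ge> 0"
  shows "c * norm P \<le> norm (W ** P)"
proof (rule power2_le_imp_le)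
  have "(\<Sum>j\<in>UNIV. (c * norm (column j P))\<^sup>2) \<le> (norm (W ** P))\<^sup>2"
    unfolding power2_norm_matrix_mult_columns
    by (intro sum_mono power_mono) (use assms in \<open>simp_all add: bounded_below_def\<close>)
  then show "(c * norm P)\<^sup>2 \<le> (norm (W ** P))\<^sup>2"
    by (simp add: power2_norm_columns[of P] power_mult_distrib sum_distrib_left)
qed simp

lemma bounded_below_mono: "bounded_below a A \<Longrightarrow> c \<le> a \<Longrightarrow> bounded_below c A"
  unfolding bounded_below_def by (meson mult_right_mono norm_ge_zero order_trans)

lemma bounded_below_perturb:
  assumes "bounded_below a B" and "norm (A - B) \<le> e"
  shows "bounded_below (a - e) A"
  unfolding bounded_below_def
proof
  fix x
  have "B *v x = A *v x - (A - B) *v x"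
    by (simp add: matrix_vector_mult_diff_rdistrib)
  then have "norm (B *v x) \<le> norm (A *v x) + norm ((A - B) *v x)"
    by (metis norm_triangle_ineq4)
  moreover have "norm ((A - B) *v x) \<le> e * norm x"
    using norm_matrix_vector_mult_le[of "A - B" x] mult_right_mono[OF assms(2) norm_ge_zero]
    by (rule order_trans)
  moreover have "a * norm x \<le> norm (B *v x)"
    using assms(1) by (simp add: bounded_below_def)
  ultimately show "(a - e) * norm x \<le> norm (A *v x)"
    by (simp add: left_diff_distrib)
qed

lemma bounded_below_left_inverse:
  assumes "Q ** P = mat 1" and "\<And>x. norm (Q *v x) \<le> L * norm x" and "L > 0"
  shows "bounded_below (1 / L) P"
  unfolding bounded_below_def
proof
  fix x
  have "norm x \<le> L * norm (P *v x)"
    using assms(2)[of "P *v x"] by (simp add: matrix_vector_mul_assoc assms(1))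
  then show "1 / L * norm x \<le> norm (P *v x)"
    using assms(3) by (simp add: field_simps)
qed

lemma invertible_if_bounded_below:
  fixes A :: "real^'n^'n"
  assumes "bounded_below c A" and "c > 0"
  shows "invertible A"
proof -
  have "inj ((*v) A)"
  proof (rule injI)
    fix x y assume "A *v x = A *v y"
    then have "c * norm (x - y) \<le> norm (A *v (x - y))"
      using assms(1) unfolding bounded_below_def by blast
    then have "c * norm (x - y) \<le> 0"
      using \<open>A *v x = A *v y\<close> by (simp add: matrix_vector_mult_diff_distrib)
    then show "x = y" using assms(2) by (simp add: mult_le_0_iff)
  qed
  then show ?thesis by (simp add: invertible_left_inverse matrix_left_invertible_injective)
qed

lemma bounded_below_diagm:
  assumes "\<And>i. m \<le> \<bar>l i\<bar>"
  shows "bounded_below m (diagm l)"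
  unfolding bounded_below_def
proof
  fix x
  show "m * norm x \<le> norm (diagm l *v x)"
  proof (cases "m \<le> 0")
    case False
    have "m\<^sup>2 * (x$i)\<^sup>2 \<le> (l i)\<^sup>2 * (x$i)\<^sup>2" for i
      using assms[of i] False
      by (intro mult_right_mono) (metis not_le order.strict_implies_order power2_abs power_mono, simp)
    then have "(m * norm x)\<^sup>2 \<le> (norm (diagm l *v x))\<^sup>2"
      by (simp add: power2_norm_diagm_mult_vec power2_norm_vec[of x] power_mult_distrib
          sum_distrib_left sum_mono)
    then show ?thesis by (rule power2_le_imp_le) simp
  qed (metis mult_nonpos_nonneg norm_ge_zero order_trans)
qed

section \<open>Matrices with orthonormal columns\<close>

lemma norm_isometry_mult_vec:
  fixes U :: "real^'r^'d"
  assumes "transpose U ** U = mat 1"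
  shows "norm (U *v x) = norm x"
proof -
  have "(U *v x) \<bullet> (U *v x) = x \<bullet> x"
    by (simp only: inner_matrix_vector_mult_transpose matrix_vector_mul_assoc assms matrix_vector_mul_lid)
  then show ?thesis by (simp add: norm_eq_sqrt_inner)
qed

lemma norm_transpose_isometry_mult_vec_le:
  fixes U :: "real^'r^'d"
  assumes "transpose U ** U = mat 1"
  shows "norm (transpose U *v x) \<le> norm x"
proof -
  define y where "y = transpose U *v x"
  have "norm y * norm y = y \<bullet> y"
    by (simp only: power2_norm_eq_inner[symmetric] power2_eq_square)
  also have "\<dots> = x \<bullet> (U *v y)"
    by (subst (1) y_def) (simp only: inner_matrix_vector_mult_transpose transpose_transpose)
  also have "\<dots> \<le> norm x * norm y"
    using norm_cauchy_schwarz[of x "U *v y"] by (simp only: norm_isometry_mult_vec[OF assms])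
  finally have "norm y * norm y \<le> norm x * norm y" .
  then have "norm y \<le> norm x"
    using mult_le_cancel_right_pos[of "norm y" "norm y" "norm x"] by fastforce
  then show ?thesis by (simp only: y_def)
qed

lemma norm_isometry_mult:
  fixes U :: "real^'r^'d"
  assumes "transpose U ** U = mat 1"
  shows "norm (U ** P) = norm P"
proof (rule antisym)
  show "norm (U ** P) \<le> norm P"
    using norm_matrix_mult_le[of U 1 P] by (simp add: norm_isometry_mult_vec[OF assms])
  show "norm P \<le> norm (U ** P)"
    using norm_matrix_mult_ge[of 1 U P] by (simp add: bounded_below_def norm_isometry_mult_vec[OF assms])
qed

lemma norm_mult_transpose_isometry:
  fixes V :: "real^'r^'d"
  assumes "transpose V ** V = mat 1"
  shows "norm (P ** transpose V) = norm P"
proof -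
  have "norm (P ** transpose V) = norm (V ** transpose P)"
    using norm_transpose[of "P ** transpose V"] by (simp only: matrix_transpose_mul transpose_transpose)
  then show ?thesis
    by (simp only: norm_isometry_mult[OF assms] norm_transpose)
qed

lemma norm_transpose_isometry_mult_le:
  fixes U :: "real^'r^'d"
  assumes "transpose U ** U = mat 1"
  shows "norm (transpose U ** P) \<le> norm P"
  using norm_matrix_mult_le[of "transpose U" 1 P] norm_transpose_isometry_mult_vec_le[OF assms] by simp

lemma bounded_below_isometry_mult:
  fixes V :: "real^'r^'d"
  assumes "transpose V ** V = mat 1"
  shows "bounded_below c (V ** P) \<longleftrightarrow> bounded_below c P"
  by (simp add: bounded_below_def matrix_vector_mul_assoc[symmetric] norm_isometry_mult_vec[OF assms])

lemma power2_norm_residual_split: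
  fixes U :: "real^'r^'d" and X :: "real^'k^'d"
  assumes U: "transpose U ** U = mat 1"
  shows "(norm (X ** Y - U ** Z))\<^sup>2
       = (norm (transpose U ** X ** Y - Z))\<^sup>2 + (norm ((X - U ** (transpose U ** X)) ** Y))\<^sup>2"
proof -
  define Xp where "Xp = X - U ** (transpose U ** X)"
  have "X ** Y - U ** Z = U ** (transpose U ** X ** Y - Z) + Xp ** Y"
    by (simp add: Xp_def matrix_mult_diff_distrib matrix_mult_diff_rdistrib matrix_mul_assoc)
  moreover have "orthogonal (U ** (transpose U ** X ** Y - Z)) (Xp ** Y)"
  proof -
    have "transpose U ** Xp = 0"
      by (simp add: Xp_def matrix_mult_diff_distrib matrix_mul_assoc U)
    then show ?thesis
      by (simp add: orthogonal_def inner_matrix_mult_transpose matrix_mul_assoc)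
  qed
  ultimately show ?thesis
    unfolding Xp_def by (simp add: norm_add_Pythagorean norm_isometry_mult[OF U])
qed

section \<open>An upper bound for the \<open>r\<close>-th singular value\<close>

lemma subspace_kernel_nontrivial:
  fixes f :: "'a::euclidean_space \<Rightarrow> 'b::euclidean_space"
  assumes "linear f" and "subspace S" and "f ` S \<subseteq> T" and "dim T < dim S"
  obtains x where "x \<in> S" "x \<noteq> 0" "f x = 0"
proof -
  have "\<not> inj_on f S"
  proof
    assume "inj_on f S"
    moreover have "span S = S"
      using assms(2) by (rule span_eq_iff[THEN iffD2])
    ultimately have "dim (f ` S) = dim S"
      by (metis dim_image_eq[OF assms(1)])
    moreover have "dim (f ` S) \<le> dim T"
      using assms(3) by (rule dim_subset)
    ultimately show False
      using assms(4) by simp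
  qed
  then obtain x y where "x \<in> S" "y \<in> S" "x \<noteq> y" "f x = f y"
    by (auto simp: inj_on_def)
  then show thesis
    using that[of "x - y"] assms(2) by (simp add: subspace_diff linear_diff[OF assms(1)])
qed

lemma subspace_unit_vector_aligned:
  fixes W :: "real^'d^'r" and S :: "(real^'d) set"
  assumes "subspace S" and "dim S = CARD('r)"
  obtains u where "u \<in> S" "norm u = 1" "\<And>j. j \<noteq> i \<Longrightarrow> (W *v u) $ j = 0"
proof -
  define G :: "real^'d^'r" where "G = (\<chi> j. if j = i then 0 else W $ j)"
  define T :: "(real^'r) set" where "T = {y. y $ i = 0}"
  have "span T = T"
    unfolding T_def by (rule span_eq_iff[THEN iffD2, OF subspace_special_hyperplane])
  then have "axis i 1 \<notin> span T"
    unfolding \<open>span T = T\<close> by (simp add: T_def)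
  then have "dim T \<noteq> CARD('r)"
    using dim_eq_full[of T] by auto
  then have "dim T < dim S"
    using dim_subset_UNIV_cart[of T] assms(2) by simp
  moreover have "(*v) G ` S \<subseteq> T"
    by (auto simp: T_def G_def matrix_vector_mult_def)
  ultimately obtain z where z: "z \<in> S" "z \<noteq> 0" "G *v z = 0"
    using subspace_kernel_nontrivial[OF matrix_vector_mul_linear assms(1)] by blast
  define u where "u = inverse (norm z) *\<^sub>R z"
  have "G *v u = 0"
    by (simp add: u_def matrix_vector_mult_scaleR z(3))
  moreover have "(W *v u) $ j = (G *v u) $ j" if "j \<noteq> i" for j
    using that by (simp add: G_def matrix_vector_mult_def)
  moreover have "u \<in> S" and "norm u = 1"
    using z assms(1) by (simp_all add: u_def subspace_scale)
  ultimately show thesis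
    using that by simp
qed

lemma singular_value_svd_le:
  fixes U :: "real^'r^'d1" and V :: "real^'r^'d2"
  assumes U: "transpose U ** U = mat 1" and V: "transpose V ** V = mat 1"
  shows "singular_value CARD('r) (U ** diagm lam ** transpose V) \<le> \<bar>lam i\<bar>"
proof -
  define M where "M = U ** diagm lam ** transpose V"
  define F where "F S = Inf ((\<lambda>x. norm (M *v x)) ` {x\<in>S. norm x = 1})" for S
  define SS where "SS = {S :: (real^'d2) set. subspace S \<and> dim S = CARD('r)}"
  have "range ((*v) V) \<in> SS"
  proof -
    have "inj ((*v) V)"
    proof (rule injI)
      fix x y
      assume "V *v x = V *v y"
      then have "norm (V *v (x - y)) = 0"
        by (simp add: matrix_vector_mult_diff_distrib)
      then show "x = y"
        by (simp add: norm_isometry_mult_vec[OF V])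
    qed
    then have "dim (range ((*v) V)) = dim (UNIV :: (real^'r) set)"
      by (intro dim_image_eq) (auto intro: inj_on_subset)
    then show ?thesis
      by (simp add: SS_def linear_subspace_image)
  qed
  moreover have "F S \<le> \<bar>lam i\<bar>" if S: "S \<in> SS" for S
  proof -
    obtain u where u: "u \<in> S" "norm u = 1" and aligned: "\<And>j. j \<noteq> i \<Longrightarrow> (transpose V *v u) $ j = 0"
      using subspace_unit_vector_aligned[where W = "transpose V" and S = S and i = i] S
      by (auto simp: SS_def)
    have "lam j * (transpose V *v u) $ j = lam i * (transpose V *v u) $ j" for j
      using aligned[of j] by (cases "j = i") simp_all
    then have "diagm lam *v (transpose V *v u) = lam i *\<^sub>R (transpose V *v u)"
      by (simp add: diagm_mult_vec vec_eq_iff)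
    then have "norm (M *v u) = \<bar>lam i\<bar> * norm (transpose V *v u)"
      by (simp add: M_def norm_isometry_mult_vec[OF U] flip: matrix_vector_mul_assoc)
    also have "\<dots> \<le> \<bar>lam i\<bar>"
      using norm_transpose_isometry_mult_vec_le[OF V, of u] u(2) by (simp add: mult_left_le)
    finally have "norm (M *v u) \<le> \<bar>lam i\<bar>" .
    moreover have "F S \<le> norm (M *v u)"
      unfolding F_def using u by (intro cInf_lower) (auto intro: bdd_belowI[where m = 0])
    ultimately show ?thesis
      by simp
  qed
  ultimately have "Sup (F ` SS) \<le> \<bar>lam i\<bar>"
    by (intro cSup_least) auto
  then show ?thesis
    by (simp add: singular_value_def M_def F_def SS_def)
qed

section \<open>The distance to the orbit\<close>

lemma dist_Dstar_nonneg: "dist_Dstar X Y Xs Ys \<ge> 0"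
proof -
  have "invertible (mat 1 :: real^'r^'r)"
    unfolding invertible_def by auto
  then show ?thesis
    unfolding dist_Dstar_def by (intro cInf_greatest) auto
qed

lemma dist_Dstar_le:
  fixes Xs :: "real^'r^'d1"
  assumes "invertible A"
  shows "dist_Dstar X Y Xs Ys
       \<le> sqrt ((norm (X - Xs ** A))\<^sup>2 + (norm (Y - matrix_inv A ** Ys))\<^sup>2)"
proof -
  define f where "f A = sqrt ((norm (X - Xs ** A))\<^sup>2 + (norm (Y - matrix_inv A ** Ys))\<^sup>2)"
    for A :: "real^'r^'r"
  have "f A \<in> f ` {A. invertible A}"
    using assms by blast
  moreover have "bdd_below (f ` {A. invertible A})"
    by (rule bdd_belowI[where m = 0]) (auto simp: f_def)
  ultimately have "Inf (f ` {A. invertible A}) \<le> f A"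
    by (rule cInf_lower)
  then show ?thesis
    by (simp add: dist_Dstar_def frob_eq_norm f_def)
qed

lemma dist_Dstar_lessE:
  fixes Xs :: "real^'r^'d1"
  assumes "dist_Dstar X Y Xs Ys < \<delta>"
  obtains A where "invertible A" "norm (X - Xs ** A) < \<delta>" "norm (Y - matrix_inv A ** Ys) < \<delta>"
proof -
  define f where "f A = sqrt ((norm (X - Xs ** A))\<^sup>2 + (norm (Y - matrix_inv A ** Ys))\<^sup>2)"
    for A :: "real^'r^'r"
  have "invertible (mat 1 :: real^'r^'r)"
    unfolding invertible_def by auto
  then have "f ` {A. invertible A} \<noteq> {}"
    by blast
  moreover have "Inf (f ` {A. invertible A}) < \<delta>"
    using assms by (simp add: dist_Dstar_def frob_eq_norm f_def)
  ultimately obtain A where A: "invertible A" and less: "f A < \<delta>"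
    using cInf_lessD by (metis (no_types, lifting) imageE mem_Collect_eq)
  show thesis
  proof (rule that[OF A])
    show "norm (X - Xs ** A) < \<delta>"
      using real_sqrt_sum_squares_ge1 less order_le_less_trans unfolding f_def by blast
    show "norm (Y - matrix_inv A ** Ys) < \<delta>"
      using real_sqrt_sum_squares_ge2 less order_le_less_trans unfolding f_def by blast
  qed
qed

lemma dist_Dstar_le_residual:
  fixes U :: "real^'r^'d1" and D :: "real^'r^'r" and Y Ys :: "real^'d2^'r"
  assumes U: "transpose U ** U = mat 1" and D: "invertible D" and "c > 0"
    and X_below: "bounded_below c (transpose U ** X)" and Y_below: "bounded_below c (transpose Y)"
  shows "c * dist_Dstar X Y (U ** D) Ys \<le> norm (X ** Y - U ** D ** Ys)"
proof -
  define X1 where "X1 = transpose U ** X"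
  define A where "A = matrix_inv D ** X1"
  define Xp where "Xp = X - U ** X1"
  define W where "W = Y - matrix_inv A ** Ys"
  have "invertible (matrix_inv D)"
    using matrix_inv[OF D] invertible_def by blast
  then have A: "invertible A"
    unfolding A_def X1_def
    using invertible_mult invertible_if_bounded_below[OF X_below \<open>c > 0\<close>] by blast
  have DA: "D ** A = X1"
    by (simp add: A_def matrix_mul_assoc matrix_inv_right[OF D])
  have X1A: "X1 ** matrix_inv A = D"
    by (metis DA matrix_inv_right[OF A] matrix_mul_assoc matrix_mul_rid)
  have "X - U ** D ** A = Xp"
    by (simp add: Xp_def DA flip: matrix_mul_assoc)
  then have dist_le: "dist_Dstar X Y (U ** D) Ys \<le> sqrt ((norm Xp)\<^sup>2 + (norm W)\<^sup>2)"
    using dist_Dstar_le[OF A, where Xs = "U ** D" and X = X and Y = Y and Ys = Ys] by (simp add: W_def)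
  have "transpose U ** X ** Y - D ** Ys = X1 ** W"
    by (simp add: W_def X1_def matrix_mult_diff_distrib matrix_mul_assoc X1A[unfolded X1_def])
  then have "(norm (X ** Y - U ** D ** Ys))\<^sup>2 = (norm (X1 ** W))\<^sup>2 + (norm (Xp ** Y))\<^sup>2"
    using power2_norm_residual_split[OF U, of X Y "D ** Ys"]
    by (simp add: Xp_def X1_def matrix_mul_assoc)
  also have "\<dots> \<ge> (c * norm W)\<^sup>2 + (c * norm Xp)\<^sup>2"
  proof -
    have "c * norm W \<le> norm (X1 ** W)"
      using norm_matrix_mult_ge[OF X_below] \<open>c > 0\<close> by (simp add: X1_def)
    moreover have "c * norm Xp \<le> norm (Xp ** Y)"
      using norm_matrix_mult_ge[OF Y_below, of "transpose Xp"] \<open>c > 0\<close>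
      by (metis less_imp_le matrix_transpose_mul norm_transpose)
    ultimately show ?thesis
      using \<open>c > 0\<close> by (intro add_mono power_mono) simp_all
  qed
  finally have "(c * sqrt ((norm Xp)\<^sup>2 + (norm W)\<^sup>2))\<^sup>2 \<le> (norm (X ** Y - U ** D ** Ys))\<^sup>2"
    using \<open>c > 0\<close> by (simp add: power_mult_distrib algebra_simps)
  then have "c * sqrt ((norm Xp)\<^sup>2 + (norm W)\<^sup>2) \<le> norm (X ** Y - U ** D ** Ys)"
    by (rule power2_le_imp_le) simp
  then show ?thesis
    using dist_le \<open>c > 0\<close> by (meson mult_left_mono less_imp_le order_trans)
qed

section \<open>Lower bounds for nearby factors\<close>

lemma factors_bounded_below:
  fixes U :: "real^'r^'d1" and V :: "real^'r^'d2" and B C :: "real^'r^'r"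
  assumes U: "transpose U ** U = mat 1" and V: "transpose V ** V = mat 1"
    and B: "bounded_below a B" and C: "bounded_below a (transpose C)"
    and X_near: "norm (X - U ** B) \<le> e" and Y_near: "norm (Y - C ** transpose V) \<le> e"
  shows "bounded_below (a - e) (transpose U ** X)" and "bounded_below (a - e) (transpose Y)"
proof -
  have "transpose U ** X - B = transpose U ** (X - U ** B)"
    by (simp add: matrix_mult_diff_distrib matrix_mul_assoc U)
  then have "norm (transpose U ** X - B) \<le> e"
    using norm_transpose_isometry_mult_le[OF U, of "X - U ** B"] X_near by simp
  then show "bounded_below (a - e) (transpose U ** X)"
    by (rule bounded_below_perturb[OF B])
  have "transpose Y - V ** transpose C = transpose (Y - C ** transpose V)"
    by (simp add: transpose_diff matrix_transpose_mul)
  then have "norm (transpose Y - V ** transpose C) \<le> e"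
    using Y_near by (simp add: norm_transpose)
  moreover have "bounded_below a (V ** transpose C)"
    using C by (simp add: bounded_below_isometry_mult[OF V])
  ultimately show "bounded_below (a - e) (transpose Y)"
    using bounded_below_perturb by blast
qed

lemma bounded_below_near_diagm:
  fixes P Q :: "real^'r^'r"
  assumes inverse: "Q ** diagm (\<lambda>i. 1 / (d i)\<^sup>2) ** P = mat 1"
    and Q_near: "norm (Q - diagm d) \<le> \<mu>" and "s > 0" and d_ge: "\<And>i. s \<le> d i"
  shows "bounded_below (s\<^sup>2 / (s + \<mu>)) P"
proof -
  define E where "E = diagm (\<lambda>i. 1 / (d i)\<^sup>2)"
  have "\<mu> \<ge> 0"
    using Q_near norm_ge_zero order_trans by blast
  have d_pos: "d i > 0" for i
    using d_ge[of i] \<open>s > 0\<close> by linarith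
  have "norm ((Q ** E) *v x) \<le> ((s + \<mu>) / s\<^sup>2) * norm x" for x
  proof -
    have DE: "diagm d ** E = diagm (\<lambda>i. 1 / d i)"
      unfolding E_def diagm_mult_diagm
      by (rule arg_cong[where f = diagm]) (use d_pos in \<open>auto simp: fun_eq_iff power2_eq_square\<close>)
    have "(Q ** E) *v x = diagm d *v (E *v x) + (Q - diagm d) *v (E *v x)"
      by (simp add: matrix_vector_mult_diff_rdistrib flip: matrix_vector_mul_assoc)
    then have "norm ((Q ** E) *v x)
        \<le> norm (diagm (\<lambda>i. 1 / d i) *v x) + norm ((Q - diagm d) *v (E *v x))"
      by (simp add: matrix_vector_mul_assoc DE norm_triangle_ineq)
    moreover have "norm (diagm (\<lambda>i. 1 / d i) *v x) \<le> (1 / s) * norm x"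
      using d_pos d_ge \<open>s > 0\<close> by (intro norm_diagm_mult_vec_le) (simp add: abs_of_pos frac_le)
    moreover have "norm (E *v x) \<le> (1 / s\<^sup>2) * norm x"
      unfolding E_def using d_pos d_ge \<open>s > 0\<close>
      by (intro norm_diagm_mult_vec_le) (simp add: frac_le power_mono)
    then have "norm ((Q - diagm d) *v (E *v x)) \<le> \<mu> * ((1 / s\<^sup>2) * norm x)"
      using norm_matrix_vector_mult_le[of "Q - diagm d" "E *v x"] Q_near \<open>\<mu> \<ge> 0\<close>
      by (meson mult_mono norm_ge_zero order_trans)
    ultimately have "norm ((Q ** E) *v x) \<le> (1 / s) * norm x + \<mu> * ((1 / s\<^sup>2) * norm x)"
      by linarith
    also have "\<dots> = ((s + \<mu>) / s\<^sup>2) * norm x"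
      using \<open>s > 0\<close> by (simp add: field_simps power2_eq_square)
    finally show ?thesis .
  qed
  then have "bounded_below (1 / ((s + \<mu>) / s\<^sup>2)) P"
    using inverse \<open>s > 0\<close> \<open>\<mu> \<ge> 0\<close>
    by (intro bounded_below_left_inverse[of "Q ** E"]) (simp_all add: E_def matrix_mul_assoc)
  then show ?thesis
    by simp
qed

lemma balanced_factors_bounded_below:
  fixes A :: "real^'r^'r"
  assumes A: "invertible A" and "s > 0" and d_ge: "\<And>i. s \<le> d i"
    and B_near: "norm (diagm d ** A - diagm d) \<le> \<mu>"
    and C_near: "norm (matrix_inv A ** diagm d - diagm d) \<le> \<mu>"
  shows "bounded_below (s\<^sup>2 / (s + \<mu>)) (diagm d ** A)"
    and "bounded_below (s\<^sup>2 / (s + \<mu>)) (transpose (matrix_inv A ** diagm d))"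
proof -
  define D where "D = diagm d"
  define E where "E = diagm (\<lambda>i. 1 / (d i)\<^sup>2)"
  define B where "B = D ** A"
  define C where "C = matrix_inv A ** D"
  have "D ** E ** D = mat 1"
  proof -
    have "d i \<noteq> 0" for i
      using d_ge[of i] \<open>s > 0\<close> by linarith
    then have "(\<lambda>i. d i * (1 / (d i)\<^sup>2) * d i) = (\<lambda>i. 1)"
      by (simp add: fun_eq_iff power2_eq_square)
    then show ?thesis
      by (simp only: D_def E_def diagm_mult_diagm diagm_const)
  qed
  moreover have "C ** E ** B = matrix_inv A ** (D ** E ** D) ** A"
    by (simp add: C_def B_def matrix_mul_assoc)
  ultimately have inverse: "C ** E ** B = mat 1"
    by (simp add: matrix_inv_left[OF A])
  then have "transpose B ** E ** transpose C = mat 1"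
    by (metis E_def matrix_mul_assoc matrix_transpose_mul transpose_diagm transpose_mat)
  moreover have "norm (transpose B - D) \<le> \<mu>"
    using B_near norm_transpose[of "B - D"]
    by (simp add: B_def D_def transpose_diff transpose_diagm)
  ultimately show "bounded_below (s\<^sup>2 / (s + \<mu>)) (transpose (matrix_inv A ** diagm d))"
    using bounded_below_near_diagm[of "transpose B" d "transpose C" \<mu> s] \<open>s > 0\<close> d_ge
    by (simp add: C_def D_def E_def)
  show "bounded_below (s\<^sup>2 / (s + \<mu>)) (diagm d ** A)"
    using bounded_below_near_diagm[of C d B \<mu> s] inverse C_near \<open>s > 0\<close> d_ge
    by (simp add: B_def C_def D_def E_def)
qed

lemma margin_large_nu:
  fixes s \<nu> K :: real
  assumes "s > 0" and "\<nu> > 1/2" and K_def: "K = 1 + 2 * (1 + sqrt 2) * \<nu>"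
  shows "s / (2 * K) \<le> s\<^sup>2 / (s + (6 * s / (5 * K) + \<nu> * s)) - 6 * s / (5 * K)"
proof -
  have "sqrt 2 \<ge> 7/5"
    by (rule real_le_rsqrt) (simp add: power2_eq_square)
  then have K_ge: "K \<ge> 1 + 24/5 * \<nu>"
    using \<open>\<nu> > 1/2\<close> by (simp add: K_def algebra_simps)
  have "K * (1 + 24/5 * \<nu>) \<le> K * K"
    using K_ge \<open>\<nu> > 1/2\<close> by (intro mult_left_mono) simp_all
  moreover have "K * (1/2) \<le> K * \<nu>"
    using K_ge \<open>\<nu> > 1/2\<close> by (intro mult_left_mono) simp_all
  moreover have "K * (1 + 24/5 * \<nu>) = K + 24/5 * (K * \<nu>)"
    by (simp add: algebra_simps)
  ultimately have "17 * K + 17 * (K * \<nu>) + 102/5 \<le> 10 * (K * K)"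
    using K_ge \<open>\<nu> > 1/2\<close> by linarith
  then have ratio: "(17 * K + 17 * (K * \<nu>) + 102/5) / (10 * (K * K)) \<le> 1"
    using K_ge \<open>\<nu> > 1/2\<close> by simp
  have "(s / (2 * K) + 6 * s / (5 * K)) * (s + (6 * s / (5 * K) + \<nu> * s))
      = s\<^sup>2 * ((17 * K + 17 * (K * \<nu>) + 102/5) / (10 * (K * K)))"
    using K_ge \<open>\<nu> > 1/2\<close> by (simp add: field_simps power2_eq_square)
  also have "\<dots> \<le> s\<^sup>2"
    using mult_left_mono[OF ratio, of "s\<^sup>2"] by simp
  moreover have "s + (6 * s / (5 * K) + \<nu> * s) > 0"
    using K_ge \<open>\<nu> > 1/2\<close> \<open>s > 0\<close> by (intro add_pos_pos) simp_all
  ultimately have "s / (2 * K) + 6 * s / (5 * K) \<le> s\<^sup>2 / (s + (6 * s / (5 * K) + \<nu> * s))"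
    by (simp only: pos_le_divide_eq)
  then show ?thesis
    by simp
qed

lemma factors_bounded_below_near_orbit:
  fixes U :: "real^'r^'d1" and V :: "real^'r^'d2" and A :: "real^'r^'r"
  assumes U: "transpose U ** U = mat 1" and V: "transpose V ** V = mat 1"
    and A: "invertible A" and "s > 0" and d_ge: "\<And>i. s \<le> d i"
    and X_close: "norm (X - U ** diagm d) \<le> \<epsilon>"
    and Y_close: "norm (Y - diagm d ** transpose V) \<le> \<epsilon>"
    and X_orbit: "norm (X - U ** diagm d ** A) \<le> \<delta>"
    and Y_orbit: "norm (Y - matrix_inv A ** (diagm d ** transpose V)) \<le> \<delta>"
  shows "bounded_below (s\<^sup>2 / (s + (\<delta> + \<epsilon>)) - \<delta>) (transpose U ** X)"
    and "bounded_below (s\<^sup>2 / (s + (\<delta> + \<epsilon>)) - \<delta>) (transpose Y)"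
proof -
  define D where "D = diagm d"
  have "norm (D ** A - D) = norm ((X - U ** D) - (X - U ** D ** A))"
    by (simp add: norm_isometry_mult[OF U, symmetric] matrix_mult_diff_distrib matrix_mul_assoc)
  also have "\<dots> \<le> \<delta> + \<epsilon>"
    using norm_triangle_ineq4[of "X - U ** D" "X - U ** D ** A"] X_close X_orbit
    unfolding D_def by linarith
  finally have B_near: "norm (D ** A - D) \<le> \<delta> + \<epsilon>" .
  have "norm (matrix_inv A ** D - D)
      = norm ((Y - D ** transpose V) - (Y - matrix_inv A ** (D ** transpose V)))"
    by (simp add: norm_mult_transpose_isometry[OF V, symmetric] matrix_mult_diff_rdistrib
        matrix_mul_assoc)
  also have "\<dots> \<le> \<delta> + \<epsilon>"
    using norm_triangle_ineq4[of "Y - D ** transpose V" "Y - matrix_inv A ** (D ** transpose V)"]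
      Y_close Y_orbit
    unfolding D_def by linarith
  finally have C_near: "norm (matrix_inv A ** D - D) \<le> \<delta> + \<epsilon>" .
  note balanced = balanced_factors_bounded_below[OF A \<open>s > 0\<close> d_ge B_near[unfolded D_def]
      C_near[unfolded D_def]]
  show "bounded_below (s\<^sup>2 / (s + (\<delta> + \<epsilon>)) - \<delta>) (transpose U ** X)"
    and "bounded_below (s\<^sup>2 / (s + (\<delta> + \<epsilon>)) - \<delta>) (transpose Y)"
    using factors_bounded_below[OF U V balanced] X_orbit Y_orbit by (simp_all add: matrix_mul_assoc)
qed

lemma factors_bounded_below_of_close:
  fixes U :: "real^'r^'d1" and V :: "real^'r^'d2"
  assumes U: "transpose U ** U = mat 1" and V: "transpose V ** V = mat 1"
    and "s > 0" and d_ge: "\<And>i. s \<le> d i" and "\<nu> > 0"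
    and K_def: "K = 1 + 2 * (1 + sqrt 2) * \<nu>"
    and X_close: "norm (X - U ** diagm d) \<le> \<nu> * s"
    and Y_close: "norm (Y - diagm d ** transpose V) \<le> \<nu> * s"
    and dist: "dist_Dstar X Y (U ** diagm d) (diagm d ** transpose V) \<le> s / K"
  shows "bounded_below (s / (2 * K)) (transpose U ** X) \<and>
    bounded_below (s / (2 * K)) (transpose Y)"
proof -
  have "K \<ge> 1"
    using \<open>\<nu> > 0\<close> by (simp add: K_def)
  show ?thesis
  proof (cases "\<nu> \<le> 1/2")
    case True
    have "bounded_below s (diagm d)"
      using d_ge \<open>s > 0\<close> by (intro bounded_below_diagm) (metis abs_ge_self order_trans)
    then have "bounded_below (s - \<nu> * s) (transpose U ** X) \<and>
        bounded_below (s - \<nu> * s) (transpose Y)"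
      using factors_bounded_below[OF U V _ _ X_close Y_close] by (simp add: transpose_diagm)
    moreover have margin: "s / (2 * K) \<le> s - \<nu> * s"
    proof -
      have "s / (2 * K) \<le> s / 2"
        using \<open>K \<ge> 1\<close> \<open>s > 0\<close> by (intro frac_le) simp_all
      also have "\<dots> \<le> s - \<nu> * s"
        using True \<open>s > 0\<close> by (simp add: mult_right_mono)
      finally show ?thesis .
    qed
    ultimately show ?thesis
      by (elim conjE) (intro conjI bounded_below_mono[OF _ margin])
  next
    case False
    \<comment> \<open>The infimum in \<open>dist_Dstar\<close> need not be attained, so we use a radius slightly
      above \<open>s / K\<close> that still leaves the margin of \<open>margin_large_nu\<close>.\<close>
    define \<delta> where "\<delta> = 6 * s / (5 * K)"
    have "s / K < \<delta>"
      using \<open>K \<ge> 1\<close> \<open>s > 0\<close> by (simp add: \<delta>_def field_simps)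
    then have "dist_Dstar X Y (U ** diagm d) (diagm d ** transpose V) < \<delta>"
      using dist by linarith
    then obtain A where A: "invertible A"
      and X_orbit: "norm (X - U ** diagm d ** A) < \<delta>"
      and Y_orbit: "norm (Y - matrix_inv A ** (diagm d ** transpose V)) < \<delta>"
      by (rule dist_Dstar_lessE)
    have "bounded_below (s\<^sup>2 / (s + (\<delta> + \<nu> * s)) - \<delta>) (transpose U ** X) \<and>
        bounded_below (s\<^sup>2 / (s + (\<delta> + \<nu> * s)) - \<delta>) (transpose Y)"
      using factors_bounded_below_near_orbit[OF U V A \<open>s > 0\<close> d_ge X_close Y_close]
        X_orbit Y_orbit by (simp add: less_imp_le)
    moreover have margin: "s / (2 * K) \<le> s\<^sup>2 / (s + (\<delta> + \<nu> * s)) - \<delta>"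
      unfolding \<delta>_def using margin_large_nu[OF \<open>s > 0\<close> _ K_def] False by linarith
    ultimately show ?thesis
      by (elim conjE) (intro conjI bounded_below_mono[OF _ margin])
  qed
qed

lemma residual_lower_bound:
  fixes U :: "real^'r^'d1" and V :: "real^'r^'d2"
  assumes U: "transpose U ** U = mat 1" and V: "transpose V ** V = mat 1"
    and d_pos: "\<And>i. d i > 0" and d_ge: "\<And>i. s \<le> d i" and "\<nu> > 0"
    and K_def: "K = 1 + 2 * (1 + sqrt 2) * \<nu>"
    and X_close: "norm (X - U ** diagm d) \<le> \<nu> * s"
    and Y_close: "norm (Y - diagm d ** transpose V) \<le> \<nu> * s"
    and dist: "dist_Dstar X Y (U ** diagm d) (diagm d ** transpose V) \<le> s / K"
  shows "s / (2 * K) * dist_Dstar X Y (U ** diagm d) (diagm d ** transpose V)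
       \<le> norm (X ** Y - U ** diagm d ** (diagm d ** transpose V))"
proof (cases "s > 0")
  case True
  have "invertible (diagm d)"
    using d_pos by (intro invertible_diagm) (metis less_irrefl)
  moreover have "s / (2 * K) > 0"
    using True \<open>\<nu> > 0\<close> by (simp add: K_def add_pos_nonneg)
  moreover note below =
    factors_bounded_below_of_close[OF U V True d_ge \<open>\<nu> > 0\<close> K_def X_close Y_close dist]
  ultimately show ?thesis
    using dist_Dstar_le_residual[OF U] by blast
next
  case False
  then have "s / (2 * K) \<le> 0"
    using \<open>\<nu> > 0\<close> by (simp add: K_def divide_nonpos_pos add_pos_nonneg)
  then show ?thesis
    using dist_Dstar_nonneg[of X Y] by (meson mult_nonpos_nonneg norm_ge_zero order_trans)
qed

theorem theorem4p5:
  fixes M :: "real^'d2^'d1"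
    and U :: "real^'r^'d1" and V :: "real^'r^'d2" and lam :: "'r \<Rightarrow> real"
    and X :: "real^'r^'d1" and Y :: "real^'d2^'r" and \<nu> :: real
  assumes rank: "rank M = CARD('r)"
    and U_orth: "transpose U ** U = mat 1"
    and V_orth: "transpose V ** V = mat 1"
    and lam_pos: "\<And>i. lam i > 0"
    and svd: "M = U ** diagm lam ** transpose V"
    and nu_pos: "\<nu> > 0"
    and close: "max (frob (X - U ** diagm (\<lambda>i. sqrt (lam i))))
                    (frob (Y - diagm (\<lambda>i. sqrt (lam i)) ** transpose V))
                  \<le> \<nu> * sqrt (singular_value CARD('r) M)"
    and dist_small: "dist_Dstar X Y (U ** diagm (\<lambda>i. sqrt (lam i)))
                       (diagm (\<lambda>i. sqrt (lam i)) ** transpose V)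
                  \<le> sqrt (singular_value CARD('r) M) / (1 + 2 * (1 + sqrt 2) * \<nu>)"
  shows "frob (X ** Y - M) \<ge>
           sqrt (singular_value CARD('r) M) / (2 + 4 * (1 + sqrt 2) * \<nu>)
           * dist_Dstar X Y (U ** diagm (\<lambda>i. sqrt (lam i)))
               (diagm (\<lambda>i. sqrt (lam i)) ** transpose V)"
proof -
  define s where "s = sqrt (singular_value CARD('r) M)"
  define K where "K = 1 + 2 * (1 + sqrt 2) * \<nu>"
  define d where "d = (\<lambda>i. sqrt (lam i))"
  have "diagm d ** diagm d = diagm lam"
    using lam_pos by (simp add: d_def diagm_mult_diagm less_imp_le)
  then have M_eq: "M = U ** diagm d ** (diagm d ** transpose V)"
    by (simp add: svd matrix_mul_assoc flip: \<open>diagm d ** diagm d = diagm lam\<close>)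
  have "d i > 0" and "s \<le> d i" for i
    using singular_value_svd_le[OF U_orth V_orth, of lam i] lam_pos[of i]
    by (simp_all add: s_def d_def svd real_sqrt_le_mono)
  moreover have "norm (X - U ** diagm d) \<le> \<nu> * s" "norm (Y - diagm d ** transpose V) \<le> \<nu> * s"
    using close by (simp_all add: s_def d_def frob_eq_norm)
  moreover have "dist_Dstar X Y (U ** diagm d) (diagm d ** transpose V) \<le> s / K"
    using dist_small by (simp only: s_def K_def d_def)
  ultimately have "s / (2 * K) * dist_Dstar X Y (U ** diagm d) (diagm d ** transpose V)
      \<le> norm (X ** Y - M)"
    unfolding M_eq by (rule residual_lower_bound[OF U_orth V_orth _ _ nu_pos K_def])
  moreover have "2 + 4 * (1 + sqrt 2) * \<nu> = 2 * K"
    by (simp add: K_def)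
  ultimately show ?thesis
    by (simp only: s_def d_def frob_eq_norm)
qed

end
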